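(* Let $G=(V,E)$ be a graph with $n=|V|$. For all $i\in[0,n]$ and $v\in V$, we have $D_{i,v}=S_{i,v}$, where $S_{i,v}=\{v\}\cup\bigcup\{M_{v,w}\mid w\in V,\ p_v([w]_v)=i\}$.
   Context: Graphs are finite, simple, undirected, with nonempty vertex set. A module of $G=(V,E)$ is a nonempty $M\subseteq V$ such that every $u\in V\setminus M$ is adjacent either to all or to none of the vertices of $M$. For $|V|>1$ and $v\in V$, $D_G(v)$ is: the connected component of $G$ containing $v$ if $G$ is disconnected; otherwise the connected component of $\overline{G}$ containing $v$ if $\overline{G}$ is disconnected; otherwise (both connected, in which case the maximal proper modules of $G$ partition $V$) the maximal proper module of $G$ containing $v$; if $|V|=1$, $D_G(v)=\{v\}$. Define $D_{0,v}=V$ and $D_{i+1,v}=D_{G[D_{i,v}]}(v)$ for $i\in[0,n-1]$. For $v,w\in V$, $M_{v,w}$ is the intersection of all modules of $G$ containing $v$ and $w$. Define $w_1\prec_v w_2$ iff $M_{v,w_2}\subsetneq M_{v,w_1}$; $\prec_v$ is a strict weak order, so incomparability $\sim_v$ w.r.t. $\prec_v$ is an equivalence relation on $V$ with classes $[w]_v$, and $\prec_v$ induces a strict linear order on $V/{\sim_v}$. $p_v\colon V/{\sim_v}\to\mathbb{N}$ assigns to each class its position in this strict linear order, the smallest class receiving $0$. *)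

theory Defs
  imports Main
begin

text \<open>A finite simple undirected graph with vertex set V and adjacency relation E.
  Induced subgraphs G[S] are represented by the pair (S, E): all notions below are
  relativised to the given vertex set.\<close>

definition graph :: "'a set \<Rightarrow> ('a \<Rightarrow> 'a \<Rightarrow> bool) \<Rightarrow> bool" where
  "graph V E \<longleftrightarrow> finite V \<and> V \<noteq> {} \<and> (\<forall>u w. E u w \<longrightarrow> u \<in> V \<and> w \<in> V)
     \<and> (\<forall>u w. E u w \<longrightarrow> E w u) \<and> (\<forall>u. \<not> E u u)"

definition is_module :: "'a set \<Rightarrow> ('a \<Rightarrow> 'a \<Rightarrow> bool) \<Rightarrow> 'a set \<Rightarrow> bool" where
  "is_module V E M \<longleftrightarrow> M \<noteq> {} \<and> M \<subseteq> V \<and>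
     (\<forall>u \<in> V - M. (\<forall>m \<in> M. E u m) \<or> (\<forall>m \<in> M. \<not> E u m))"

definition max_proper_module :: "'a set \<Rightarrow> ('a \<Rightarrow> 'a \<Rightarrow> bool) \<Rightarrow> 'a set \<Rightarrow> bool" where
  "max_proper_module V E M \<longleftrightarrow> is_module V E M \<and> M \<subset> V \<and>
     (\<forall>M'. is_module V E M' \<and> M' \<subset> V \<and> M \<subseteq> M' \<longrightarrow> M' = M)"

definition adj_in :: "'a set \<Rightarrow> ('a \<Rightarrow> 'a \<Rightarrow> bool) \<Rightarrow> 'a \<Rightarrow> 'a \<Rightarrow> bool" where
  "adj_in V E u w \<longleftrightarrow> u \<in> V \<and> w \<in> V \<and> E u w"

definition compl_adj :: "'a set \<Rightarrow> ('a \<Rightarrow> 'a \<Rightarrow> bool) \<Rightarrow> 'a \<Rightarrow> 'a \<Rightarrow> bool" where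
  "compl_adj V E u w \<longleftrightarrow> u \<in> V \<and> w \<in> V \<and> u \<noteq> w \<and> \<not> E u w"

definition component :: "'a set \<Rightarrow> ('a \<Rightarrow> 'a \<Rightarrow> bool) \<Rightarrow> 'a \<Rightarrow> 'a set" where
  "component V E v = {w \<in> V. (adj_in V E)\<^sup>*\<^sup>* v w}"

definition connected_graph :: "'a set \<Rightarrow> ('a \<Rightarrow> 'a \<Rightarrow> bool) \<Rightarrow> bool" where
  "connected_graph V E \<longleftrightarrow> V \<noteq> {} \<and> (\<forall>u \<in> V. \<forall>w \<in> V. (adj_in V E)\<^sup>*\<^sup>* u w)"

definition Dg :: "'a set \<Rightarrow> ('a \<Rightarrow> 'a \<Rightarrow> bool) \<Rightarrow> 'a \<Rightarrow> 'a set" where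
  "Dg V E v =
    (if card V = 1 then {v}
     else if \<not> connected_graph V E then component V E v
     else if \<not> connected_graph V (compl_adj V E) then component V (compl_adj V E) v
     else (THE M. max_proper_module V E M \<and> v \<in> M))"

primrec Dseq :: "'a set \<Rightarrow> ('a \<Rightarrow> 'a \<Rightarrow> bool) \<Rightarrow> 'a \<Rightarrow> nat \<Rightarrow> 'a set" where
  "Dseq V E v 0 = V"
| "Dseq V E v (Suc i) = Dg (Dseq V E v i) E v"

definition Mvw :: "'a set \<Rightarrow> ('a \<Rightarrow> 'a \<Rightarrow> bool) \<Rightarrow> 'a \<Rightarrow> 'a \<Rightarrow> 'a set" where
  "Mvw V E v w = \<Inter> {M. is_module V E M \<and> v \<in> M \<and> w \<in> M}"

definition prec_v :: "'a set \<Rightarrow> ('a \<Rightarrow> 'a \<Rightarrow> bool) \<Rightarrow> 'a \<Rightarrow> 'a \<Rightarrow> 'a \<Rightarrow> bool" where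
  "prec_v V E v w1 w2 \<longleftrightarrow> Mvw V E v w2 \<subset> Mvw V E v w1"

definition sim_v :: "'a set \<Rightarrow> ('a \<Rightarrow> 'a \<Rightarrow> bool) \<Rightarrow> 'a \<Rightarrow> 'a \<Rightarrow> 'a \<Rightarrow> bool" where
  "sim_v V E v w1 w2 \<longleftrightarrow> \<not> prec_v V E v w1 w2 \<and> \<not> prec_v V E v w2 w1"

definition cls_v :: "'a set \<Rightarrow> ('a \<Rightarrow> 'a \<Rightarrow> bool) \<Rightarrow> 'a \<Rightarrow> 'a \<Rightarrow> 'a set" where
  "cls_v V E v w = {u \<in> V. sim_v V E v w u}"

definition classes_v :: "'a set \<Rightarrow> ('a \<Rightarrow> 'a \<Rightarrow> bool) \<Rightarrow> 'a \<Rightarrow> 'a set set" where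
  "classes_v V E v = cls_v V E v ` V"

definition cls_less :: "'a set \<Rightarrow> ('a \<Rightarrow> 'a \<Rightarrow> bool) \<Rightarrow> 'a \<Rightarrow> 'a set \<Rightarrow> 'a set \<Rightarrow> bool" where
  "cls_less V E v C1 C2 \<longleftrightarrow> (\<exists>w1 \<in> C1. \<exists>w2 \<in> C2. prec_v V E v w1 w2)"

text \<open>p_v(C): position of C in the strict linear order on V/~_v (smallest class gets 0),
  i.e. the number of classes strictly below C.\<close>
definition pos_v :: "'a set \<Rightarrow> ('a \<Rightarrow> 'a \<Rightarrow> bool) \<Rightarrow> 'a \<Rightarrow> 'a set \<Rightarrow> nat" where
  "pos_v V E v C = card {C' \<in> classes_v V E v. cls_less V E v C' C}"

definition Sset :: "'a set \<Rightarrow> ('a \<Rightarrow> 'a \<Rightarrow> bool) \<Rightarrow> 'a \<Rightarrow> nat \<Rightarrow> 'a set" where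
  "Sset V E v i = {v} \<union> \<Union> {Mvw V E v w | w. w \<in> V \<and> pos_v V E v (cls_v V E v w) = i}"

end

(* In each of the three cases of its definition, D = D_{G[U]}(v) is a proper module of G[U]
   containing v which is contained in every module that contains v but is not inside D, and the
   sets M_{v,w} for w in U - D are pairwise incomparable: they are unions of two components of G
   or of its complement, resp. all of U.  Hence a vertex w <> v that leaves the chain
   D_{0,v} > D_{1,v} > ... at step k satisfies D_{k+1,v} < M_{v,w} <= D_{k,v}, since M_{v,w} may
   be computed in the module G[D_{k,v}].  So w1 <_v w2 iff w1 leaves strictly before w2, the
   position of [w]_v is the step at which w leaves (v leaving last), and D_{i,v} is the union of
   the M_{v,w} over the vertices w leaving at step i. *)

theory Submission
  imports Defs
begin

lemma is_module_self: "U \<noteq> {} \<Longrightarrow> is_module U E U"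
  unfolding is_module_def by blast

lemma is_module_singleton: "v \<in> U \<Longrightarrow> is_module U E {v}"
  unfolding is_module_def by blast

lemma is_module_subset: "is_module U E M \<Longrightarrow> M \<subseteq> U"
  unfolding is_module_def by blast

lemma is_module_trans:
  assumes U: "is_module V E U" and M: "is_module U E M"
  shows "is_module V E M"
proof -
  have "M \<subseteq> U" using M by (rule is_module_subset)
  then show ?thesis
    using U M unfolding is_module_def by (metis Diff_iff subset_eq)
qed

lemma is_module_Int:
  assumes M: "is_module V E M" and "U \<subseteq> V" and "M \<inter> U \<noteq> {}"
  shows "is_module U E (M \<inter> U)"
  using assms unfolding is_module_def by blast

lemma is_module_Un:
  assumes A: "is_module U E A" and B: "is_module U E B" and "y \<in> A" "y \<in> B"
  shows "is_module U E (A \<union> B)"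
  unfolding is_module_def
proof (intro conjI ballI)
  show "A \<union> B \<noteq> {}" "A \<union> B \<subseteq> U"
    using assms by (auto dest: is_module_subset)
  fix u assume "u \<in> U - (A \<union> B)"
  then have "(\<forall>m\<in>A. E u m) \<or> (\<forall>m\<in>A. \<not> E u m)" "(\<forall>m\<in>B. E u m) \<or> (\<forall>m\<in>B. \<not> E u m)"
    using A B unfolding is_module_def by blast+
  then show "(\<forall>m\<in>A \<union> B. E u m) \<or> (\<forall>m\<in>A \<union> B. \<not> E u m)"
    using \<open>y \<in> A\<close> \<open>y \<in> B\<close> by blast
qed

lemma is_module_compl_adj: "is_module U (compl_adj U E) M \<longleftrightarrow> is_module U E M"
  unfolding is_module_def compl_adj_def by blast

lemma Mvw_least: "is_module U E M \<Longrightarrow> v \<in> M \<Longrightarrow> w \<in> M \<Longrightarrow> Mvw U E v w \<subseteq> M"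
  unfolding Mvw_def by blast

lemma Mvw_greatest:
  "(\<And>M. is_module U E M \<Longrightarrow> v \<in> M \<Longrightarrow> w \<in> M \<Longrightarrow> S \<subseteq> M) \<Longrightarrow> S \<subseteq> Mvw U E v w"
  unfolding Mvw_def by blast

lemma Mvw_mem: "v \<in> Mvw U E v w" "w \<in> Mvw U E v w"
  unfolding Mvw_def by blast+

lemma Mvw_subset: "v \<in> U \<Longrightarrow> w \<in> U \<Longrightarrow> Mvw U E v w \<subseteq> U"
  by (rule Mvw_least[OF is_module_self]) auto

lemma Mvw_eqI:
  assumes "is_module U E S" "v \<in> S" "w \<in> S"
    and "\<And>M. is_module U E M \<Longrightarrow> v \<in> M \<Longrightarrow> w \<in> M \<Longrightarrow> S \<subseteq> M"
  shows "Mvw U E v w = S"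
  using Mvw_least[OF assms(1-3)] Mvw_greatest[OF assms(4)] by blast

lemma Mvw_same: "v \<in> U \<Longrightarrow> Mvw U E v v = {v}"
  by (rule Mvw_eqI[OF is_module_singleton]) simp_all

lemma Mvw_compl_adj: "Mvw U (compl_adj U E) v w = Mvw U E v w"
  unfolding Mvw_def is_module_compl_adj ..

lemma Mvw_module:
  assumes U: "is_module V E U" and "v \<in> U" "w \<in> U"
  shows "Mvw V E v w = Mvw U E v w"
proof
  show "Mvw V E v w \<subseteq> Mvw U E v w"
    by (rule Mvw_greatest, rule Mvw_least) (auto intro: is_module_trans[OF U])
  show "Mvw U E v w \<subseteq> Mvw V E v w"
  proof (rule Mvw_greatest)
    fix M assume M: "is_module V E M" "v \<in> M" "w \<in> M"
    have "is_module U E (M \<inter> U)"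
      using is_module_Int[OF M(1) is_module_subset[OF U]] M(2) \<open>v \<in> U\<close> by blast
    then show "Mvw U E v w \<subseteq> M"
      using Mvw_least[of U E "M \<inter> U" v w] M \<open>v \<in> U\<close> \<open>w \<in> U\<close> by blast
  qed
qed

lemma symp_adj_in: "symp E \<Longrightarrow> symp (adj_in U E)"
  unfolding adj_in_def symp_def by blast

lemma symp_compl_adj: "symp E \<Longrightarrow> symp (compl_adj U E)"
  unfolding compl_adj_def symp_def by blast

lemma component_self: "a \<in> U \<Longrightarrow> a \<in> component U E a"
  unfolding component_def by simp

lemma component_subset: "component U E a \<subseteq> U"
  unfolding component_def by blast

lemma component_eq:
  assumes "symp E" and "b \<in> component U E a"
  shows "component U E b = component U E a"
proof -
  have ab: "(adj_in U E)\<^sup>*\<^sup>* a b"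
    using assms(2) unfolding component_def by simp
  have ba: "(adj_in U E)\<^sup>*\<^sup>* b a"
    using sympD[OF symp_rtranclp[OF symp_adj_in[OF assms(1)]] ab] .
  show ?thesis
    unfolding component_def using rtranclp_trans[OF ab] rtranclp_trans[OF ba] by blast
qed

lemma not_adj_out_of_component:
  assumes "symp E" and u: "u \<in> U - component U E a" and m: "m \<in> component U E a"
  shows "\<not> E u m"
proof
  assume "E u m"
  then have "E m u"
    using \<open>symp E\<close> by (rule sympD[rotated])
  moreover have "m \<in> U" "u \<in> U"
    using m u unfolding component_def by simp_all
  ultimately have "adj_in U E m u"
    unfolding adj_in_def by simp
  have "(adj_in U E)\<^sup>*\<^sup>* a m"
    using m unfolding component_def by simp
  then have "(adj_in U E)\<^sup>*\<^sup>* a u"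
    using \<open>adj_in U E m u\<close> by (rule rtranclp.rtrancl_into_rtrancl)
  with u show False
    unfolding component_def by simp
qed

lemma is_module_components:
  assumes "symp E" and "A \<subseteq> U" and "A \<noteq> {}"
  shows "is_module U E (\<Union>a\<in>A. component U E a)"
  unfolding is_module_def
proof (intro conjI ballI)
  obtain a where "a \<in> A" using assms(3) by blast
  moreover have "a \<in> component U E a"
    using \<open>a \<in> A\<close> assms(2) by (intro component_self) blast
  ultimately have "a \<in> (\<Union>a\<in>A. component U E a)" by blast
  then show "(\<Union>a\<in>A. component U E a) \<noteq> {}" by blast
  show "(\<Union>a\<in>A. component U E a) \<subseteq> U"
    using component_subset by (rule UN_least)
  fix u assume u: "u \<in> U - (\<Union>a\<in>A. component U E a)"
  have "\<not> E u m" if m: "m \<in> (\<Union>a\<in>A. component U E a)" for m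
  proof -
    obtain a where "a \<in> A" "m \<in> component U E a" using m by blast
    then show ?thesis
      using not_adj_out_of_component[OF assms(1), of u U a m] u by blast
  qed
  then show "(\<forall>m\<in>\<Union>a\<in>A. component U E a. E u m) \<or> (\<forall>m\<in>\<Union>a\<in>A. component U E a. \<not> E u m)"
    by blast
qed

lemma component_subset_module:
  assumes "symp E" and M: "is_module U E M" and "a \<in> M" and "\<not> M \<subseteq> component U E a"
  shows "component U E a \<subseteq> M"
proof
  obtain w where w: "w \<in> M" "w \<notin> component U E a"
    using assms(4) by blast
  fix x assume "x \<in> component U E a"
  then have "(adj_in U E)\<^sup>*\<^sup>* a x" unfolding component_def by simp
  then show "x \<in> M"
  proof (induction rule: rtranclp_induct)
    case base
    show ?case using \<open>a \<in> M\<close> .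
  next
    case (step y z)
    show ?case
    proof (rule ccontr)
      assume "z \<notin> M"
      have z: "z \<in> U" "E z y"
        using step(2) sympD[OF \<open>symp E\<close>] unfolding adj_in_def by blast+
      have "z \<in> component U E a"
        using rtranclp.rtrancl_into_rtrancl[OF step(1,2)] z(1) unfolding component_def by simp
      have "(\<forall>m\<in>M. E z m) \<or> (\<forall>m\<in>M. \<not> E z m)"
        using M z(1) \<open>z \<notin> M\<close> unfolding is_module_def by blast
      then have "E w z"
        using step.IH z(2) w(1) sympD[OF \<open>symp E\<close>] by blast
      moreover have "w \<in> U - component U E a"
        using w is_module_subset[OF M] by blast
      ultimately show False
        using not_adj_out_of_component[OF \<open>symp E\<close> _ \<open>z \<in> component U E a\<close>] by blast
    qed
  qed
qed

lemma component_psubset: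
  assumes "symp E" and "a \<in> U" and "\<not> connected_graph U E"
  shows "component U E a \<subset> U"
proof -
  have "component U E a \<noteq> U"
  proof
    assume "component U E a = U"
    have "(adj_in U E)\<^sup>*\<^sup>* x y" if "x \<in> U" "y \<in> U" for x y
    proof -
      have "component U E x = U"
        using component_eq[OF \<open>symp E\<close>, of x U a] \<open>component U E a = U\<close> that(1) by simp
      then show ?thesis
        using that(2) unfolding component_def by blast
    qed
    then show False
      using assms(2,3) unfolding connected_graph_def by blast
  qed
  then show ?thesis
    using component_subset by (rule psubsetI[rotated])
qed

lemma Mvw_components:
  assumes "symp E" and v: "v \<in> U" and w: "w \<in> U - component U E v"
  shows "Mvw U E v w = component U E v \<union> component U E w"
proof (rule Mvw_eqI)
  show "is_module U E (component U E v \<union> component U E w)"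
    using is_module_components[OF \<open>symp E\<close>, of "{v, w}" U] v w by simp
  show "v \<in> component U E v \<union> component U E w" "w \<in> component U E v \<union> component U E w"
    using v w component_self by auto
next
  fix M assume M: "is_module U E M" "v \<in> M" "w \<in> M"
  have "v \<notin> component U E w"
  proof
    assume "v \<in> component U E w"
    then have "component U E v = component U E w"
      by (rule component_eq[OF \<open>symp E\<close>])
    then show False
      using w component_self[of w U E] by blast
  qed
  then have "\<not> M \<subseteq> component U E w"
    using M(2) by blast
  then have "component U E w \<subseteq> M"
    by (rule component_subset_module[OF \<open>symp E\<close> M(1) M(3)])
  moreover have "\<not> M \<subseteq> component U E v"
    using M(3) w by blast
  then have "component U E v \<subseteq> M"
    by (rule component_subset_module[OF \<open>symp E\<close> M(1) M(2)])
  ultimately show "component U E v \<union> component U E w \<subseteq> M"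
    by blast
qed

definition peel :: "'a set \<Rightarrow> ('a \<Rightarrow> 'a \<Rightarrow> bool) \<Rightarrow> 'a \<Rightarrow> 'a set \<Rightarrow> bool" where
  "peel U E v D \<longleftrightarrow> is_module U E D \<and> v \<in> D \<and> D \<subset> U \<and>
     (\<forall>M. is_module U E M \<and> v \<in> M \<and> \<not> M \<subseteq> D \<longrightarrow> D \<subseteq> M) \<and>
     (\<forall>w1 \<in> U - D. \<forall>w2 \<in> U - D. \<not> Mvw U E v w1 \<subset> Mvw U E v w2)"

lemma peel_psubset: "peel U E v D \<Longrightarrow> D \<subset> U"
  unfolding peel_def by simp

lemma peel_incomparable:
  "peel U E v D \<Longrightarrow> w1 \<in> U - D \<Longrightarrow> w2 \<in> U - D \<Longrightarrow> \<not> Mvw U E v w1 \<subset> Mvw U E v w2"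
  unfolding peel_def by blast

lemma peel_compl_adj: "peel U (compl_adj U E) v D \<longleftrightarrow> peel U E v D"
  unfolding peel_def is_module_compl_adj Mvw_compl_adj ..

lemma peel_psubset_Mvw:
  assumes "peel U E v D" and "w \<in> U - D"
  shows "D \<subset> Mvw U E v w"
proof -
  have "D \<subseteq> Mvw U E v w"
    using assms unfolding peel_def by (intro Mvw_greatest) blast
  then show ?thesis
    using Mvw_mem(2)[of w U E v] assms(2) by blast
qed

lemma peel_component:
  assumes "symp E" and "v \<in> U" and "\<not> connected_graph U E"
  shows "peel U E v (component U E v)"
  unfolding peel_def
proof (intro conjI allI impI ballI)
  show "is_module U E (component U E v)"
    using is_module_components[OF \<open>symp E\<close>, of "{v}" U] \<open>v \<in> U\<close> by simp
  show "v \<in> component U E v" using component_self \<open>v \<in> U\<close> .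
  show "component U E v \<subset> U" using component_psubset[OF assms] .
  show "component U E v \<subseteq> M" if "is_module U E M \<and> v \<in> M \<and> \<not> M \<subseteq> component U E v" for M
    using component_subset_module[OF \<open>symp E\<close>, of U M v] that by blast
next
  fix w1 w2 assume w: "w1 \<in> U - component U E v" "w2 \<in> U - component U E v"
  note Mvw_w = Mvw_components[OF \<open>symp E\<close> \<open>v \<in> U\<close>]
  show "\<not> Mvw U E v w1 \<subset> Mvw U E v w2"
  proof
    assume less: "Mvw U E v w1 \<subset> Mvw U E v w2"
    then have "w1 \<in> component U E w2"
      using Mvw_mem(2)[of w1 U E v] Mvw_w[OF w(2)] w(1) by blast
    then have "Mvw U E v w1 = Mvw U E v w2"
      using Mvw_w w component_eq[OF \<open>symp E\<close>] by simp
    with less show False by simp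
  qed
qed

lemma not_connected_if_no_edge_leaving:
  assumes "S \<subseteq> U" "x \<in> S" "y \<in> U - S" and "\<And>s t. s \<in> S \<Longrightarrow> t \<in> U - S \<Longrightarrow> \<not> R s t"
  shows "\<not> connected_graph U R"
proof
  assume "connected_graph U R"
  then have "(adj_in U R)\<^sup>*\<^sup>* x y"
    using assms(1-3) unfolding connected_graph_def by blast
  then have "y \<in> S"
  proof (induction rule: rtranclp_induct)
    case (step s t)
    then show ?case using assms(4)[of s t] unfolding adj_in_def by blast
  qed (rule assms(2))
  with assms(3) show False by blast
qed

text \<open>All pairs between U - A and A have the adjacency status of the pair z y, for any
  z \<in> U - B; so U - A is cut off from A either in G or in its complement.\<close>

lemma overlapping_modules_disconnected:
  assumes "symp E" and A: "is_module U E A" and B: "is_module U E B"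
    and "A \<union> B = U" and "y \<in> A" "y \<in> B" and "A \<noteq> U" "B \<noteq> U"
  shows "\<not> connected_graph U E \<or> \<not> connected_graph U (compl_adj U E)"
proof -
  obtain x z where x: "x \<in> U - A" and z: "z \<in> U - B"
    using assms(4,7,8) by blast
  have yU: "y \<in> U" using \<open>y \<in> A\<close> is_module_subset[OF A] by blast
  have uniform: "E s t = E z y" if s: "s \<in> U - A" and t: "t \<in> A" for s t
  proof -
    have "z \<in> A" "s \<in> B"
      using s z \<open>A \<union> B = U\<close> by blast+
    then have "E s t = E s z" "E z s = E z y"
      using A B s t z \<open>y \<in> B\<close> unfolding is_module_def by blast+
    moreover have "E s z = E z s"
      using \<open>symp E\<close> unfolding symp_def by blast
    ultimately show ?thesis by simp
  qed
  show ?thesis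
  proof (cases "E z y")
    case False
    then have "\<not> connected_graph U E"
      using uniform x yU \<open>y \<in> A\<close> by (intro not_connected_if_no_edge_leaving[of "U - A" U x y]) auto
    then show ?thesis ..
  next
    case True
    then have "\<not> connected_graph U (compl_adj U E)"
      using uniform x yU \<open>y \<in> A\<close> unfolding compl_adj_def
      by (intro not_connected_if_no_edge_leaving[of "U - A" U x y]) auto
    then show ?thesis ..
  qed
qed

lemma module_eq_if_not_subset_max_proper_module:
  assumes "symp E" and "connected_graph U E" "connected_graph U (compl_adj U E)"
    and M0: "max_proper_module U E M0" "v \<in> M0"
    and M: "is_module U E M" "v \<in> M" "\<not> M \<subseteq> M0"
  shows "M = U"
proof -
  have M0_module: "is_module U E M0" and "M0 \<subset> U"
    using M0 unfolding max_proper_module_def by blast+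
  have Un_module: "is_module U E (M \<union> M0)"
    using is_module_Un[OF M(1) M0_module M(2) M0(2)] .
  have Un_subset: "M \<union> M0 \<subseteq> U"
    using is_module_subset[OF M(1)] \<open>M0 \<subset> U\<close> by blast
  have "M \<union> M0 = U"
  proof (rule ccontr)
    assume "M \<union> M0 \<noteq> U"
    then have "M \<union> M0 = M0"
      using M0(1) Un_module Un_subset unfolding max_proper_module_def by blast
    then show False using M(3) by blast
  qed
  show "M = U"
  proof (rule ccontr)
    assume "M \<noteq> U"
    moreover have "M0 \<noteq> U" using \<open>M0 \<subset> U\<close> by blast
    ultimately show False
      using overlapping_modules_disconnected[OF \<open>symp E\<close> M(1) M0_module \<open>M \<union> M0 = U\<close> M(2) M0(2)]
        assms(2,3) by blast
  qed
qed

lemma the_max_proper_module: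
  assumes "symp E" and "connected_graph U E" "connected_graph U (compl_adj U E)"
    and "finite U" "v \<in> U" "U \<noteq> {v}"
  defines "M0 \<equiv> THE M. max_proper_module U E M \<and> v \<in> M"
  shows "max_proper_module U E M0 \<and> v \<in> M0"
proof -
  let ?P = "{M. is_module U E M \<and> M \<subset> U \<and> v \<in> M}"
  have "?P \<subseteq> Pow U" by auto
  then have "finite ?P"
    using \<open>finite U\<close> by (simp add: finite_subset)
  moreover have "{v} \<in> ?P"
    using is_module_singleton[OF \<open>v \<in> U\<close>] \<open>v \<in> U\<close> \<open>U \<noteq> {v}\<close> by auto
  ultimately obtain M where M: "M \<in> ?P" "\<forall>M' \<in> ?P. M \<subseteq> M' \<longrightarrow> M = M'"
    using finite_has_maximal[of ?P] by auto
  then have max: "max_proper_module U E M \<and> v \<in> M"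
    by (auto simp: max_proper_module_def)
  have unique: "M' = M" if M': "max_proper_module U E M' \<and> v \<in> M'" for M'
  proof -
    have "M' \<subseteq> M"
    proof (rule ccontr)
      assume "\<not> M' \<subseteq> M"
      then have "M' = U"
        using module_eq_if_not_subset_max_proper_module[OF assms(1-3), of M v M'] max M'
        by (simp add: max_proper_module_def)
      then show False
        using M' by (simp add: max_proper_module_def)
    qed
    then show ?thesis
      using M' max by (simp add: max_proper_module_def)
  qed
  have "M0 = M"
    unfolding M0_def using max unique by (rule the_equality)
  with max show ?thesis by simp
qed

lemma peel_max_proper_module:
  assumes "symp E" and "connected_graph U E" "connected_graph U (compl_adj U E)"
    and M0: "max_proper_module U E M0" "v \<in> M0"
  shows "peel U E v M0"
  unfolding peel_def
proof (intro conjI allI impI ballI)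
  note all_of_U = module_eq_if_not_subset_max_proper_module[OF assms]
  show "is_module U E M0" "M0 \<subset> U"
    using M0(1) by (simp_all add: max_proper_module_def)
  show "v \<in> M0" by (rule M0(2))
  show "M0 \<subseteq> M" if "is_module U E M \<and> v \<in> M \<and> \<not> M \<subseteq> M0" for M
    using all_of_U[of M] that \<open>M0 \<subset> U\<close> by auto
  have Mvw_U: "Mvw U E v w = U" if "w \<in> U - M0" for w
    using all_of_U that \<open>M0 \<subset> U\<close> M0(2) by (intro Mvw_eqI is_module_self) auto
  show "\<not> Mvw U E v w1 \<subset> Mvw U E v w2" if "w1 \<in> U - M0" "w2 \<in> U - M0" for w1 w2
    using Mvw_U that by simp
qed

lemma peel_Dg:
  assumes "symp E" and "finite U" and "v \<in> U" and "U \<noteq> {v}"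
  shows "peel U E v (Dg U E v)"
proof -
  have "card U \<noteq> 1"
  proof
    assume "card U = 1"
    then obtain x where "U = {x}" by (rule card_1_singletonE)
    with assms(3,4) show False by simp
  qed
  consider (disconnected) "\<not> connected_graph U E"
    | (co_disconnected) "connected_graph U E" "\<not> connected_graph U (compl_adj U E)"
    | (prime) "connected_graph U E" "connected_graph U (compl_adj U E)"
    by blast
  then show ?thesis
  proof cases
    case disconnected
    then show ?thesis
      using \<open>card U \<noteq> 1\<close> peel_component[OF assms(1,3)] by (simp add: Dg_def)
  next
    case co_disconnected
    then show ?thesis
      using \<open>card U \<noteq> 1\<close> peel_component[OF symp_compl_adj[OF assms(1), of U] assms(3)]
      by (simp add: Dg_def peel_compl_adj)
  next
    case prime
    then have "Dg U E v = (THE M. max_proper_module U E M \<and> v \<in> M)"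
      using \<open>card U \<noteq> 1\<close> by (simp add: Dg_def)
    then show ?thesis
      using the_max_proper_module[OF assms(1) prime assms(2-4)]
        peel_max_proper_module[OF assms(1) prime] by simp
  qed
qed

lemma pos_v_cls_v:
  assumes prec: "\<And>w1 w2. w1 \<in> V \<Longrightarrow> w2 \<in> V \<Longrightarrow> prec_v V E v w1 w2 \<longleftrightarrow> f w1 < f w2"
    and "w \<in> V" and "{..<f w} \<subseteq> f ` V"
  shows "pos_v V E v (cls_v V E v w) = f w"
proof -
  define L where "L k = {u \<in> V. f u = k}" for k
  have cls: "cls_v V E v u = L (f u)" if "u \<in> V" for u
    using prec that unfolding cls_v_def sim_v_def L_def by auto
  have classes: "classes_v V E v = L ` f ` V"
    unfolding classes_v_def using cls by (auto simp: image_iff)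
  have less: "cls_less V E v (L a) (L b) \<longleftrightarrow> a < b" if "a \<in> f ` V" "b \<in> f ` V" for a b
    using that prec unfolding cls_less_def L_def by auto
  have "{C \<in> classes_v V E v. cls_less V E v C (cls_v V E v w)} = L ` {..<f w}"
    using assms(3) less \<open>w \<in> V\<close> unfolding classes cls[OF \<open>w \<in> V\<close>] by auto
  moreover have "inj_on L (f ` V)"
    unfolding L_def by (rule inj_onI) blast
  then have "inj_on L {..<f w}"
    using assms(3) by (rule inj_on_subset)
  ultimately show ?thesis
    unfolding pos_v_def by (simp add: card_image)
qed

lemma graph_symp: "graph V E \<Longrightarrow> symp E"
  unfolding graph_def symp_def by blast

locale rooted_graph =
  fixes V :: "'a set" and E :: "'a \<Rightarrow> 'a \<Rightarrow> bool" and v :: 'a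
  assumes graph: "graph V E" and root: "v \<in> V"
begin

abbreviation D :: "nat \<Rightarrow> 'a set" where
  "D \<equiv> Dseq V E v"

lemma finite_subset_V: "U \<subseteq> V \<Longrightarrow> finite U"
  using graph unfolding graph_def by (meson finite_subset)

lemma D_invariant: "v \<in> D j \<and> is_module V E (D j)"
proof (induction j)
  case 0
  show ?case using root is_module_self[of V E] by auto
next
  case (Suc j)
  have "finite (D j)"
    using Suc is_module_subset finite_subset_V by blast
  show ?case
  proof (cases "D j = {v}")
    case True
    then show ?thesis using is_module_singleton root by (simp add: Dg_def)
  next
    case False
    then have "peel (D j) E v (D (Suc j))"
      using peel_Dg[OF graph_symp[OF graph] \<open>finite (D j)\<close>] Suc by simp
    then show ?thesis
      using is_module_trans[of V E "D j" "D (Suc j)"] Suc unfolding peel_def by blast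
  qed
qed

lemma mem_D: "v \<in> D j"
  using D_invariant by blast

lemma is_module_D: "is_module V E (D j)"
  using D_invariant by blast

lemma D_subset: "D j \<subseteq> V"
  using is_module_D by (rule is_module_subset)

lemma finite_D: "finite (D j)"
  using D_subset by (rule finite_subset_V)

lemma D_Suc_singleton: "D j = {v} \<Longrightarrow> D (Suc j) = {v}"
  by (simp add: Dg_def)

lemma peel_D: "D j \<noteq> {v} \<Longrightarrow> peel (D j) E v (D (Suc j))"
  using peel_Dg[OF graph_symp[OF graph] finite_D mem_D] by simp

lemma D_Suc_subset: "D (Suc j) \<subseteq> D j"
proof (cases "D j = {v}")
  case True
  then show ?thesis using D_Suc_singleton by simp
next
  case False
  then show ?thesis using peel_psubset[OF peel_D] by blast
qed

lemma D_antimono: "k \<le> j \<Longrightarrow> D j \<subseteq> D k"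
  using lift_Suc_antimono_le[of D, OF D_Suc_subset] .

lemma D_eventually_singleton: "\<exists>j. D j = {v}"
proof -
  have bound: "D j = {v} \<or> card (D j) + j \<le> card V" for j
  proof (induction j)
    case (Suc j)
    have "D j \<noteq> {v} \<Longrightarrow> card (D (Suc j)) < card (D j)"
      using peel_psubset[OF peel_D] finite_D by (simp add: psubset_card_mono)
    then show ?case using Suc D_Suc_singleton by fastforce
  qed simp
  have "card (D (card V)) \<noteq> 0"
    using card_0_eq[OF finite_D] mem_D by blast
  then show ?thesis
    using bound[of "card V"] by auto
qed

definition depth :: nat where
  "depth = (LEAST j. D j = {v})"

lemma D_eq_singleton_iff: "D j = {v} \<longleftrightarrow> depth \<le> j"
proof
  show "D j = {v} \<Longrightarrow> depth \<le> j"
    unfolding depth_def by (rule Least_le)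
  assume "depth \<le> j"
  then show "D j = {v}"
  proof (induction rule: dec_induct)
    case base
    show ?case
      unfolding depth_def using D_eventually_singleton by (rule LeastI_ex)
  qed (rule D_Suc_singleton)
qed

definition level :: "'a \<Rightarrow> nat" where
  "level w = (if w = v then depth else LEAST k. w \<notin> D (Suc k))"

lemma level_D:
  assumes "w \<in> V" "w \<noteq> v"
  shows "w \<in> D (level w) - D (Suc (level w))"
proof -
  have ex: "w \<notin> D (Suc depth)"
    using D_eq_singleton_iff[of "Suc depth"] assms(2) by simp
  define k where "k = (LEAST k. w \<notin> D (Suc k))"
  have "w \<notin> D (Suc k)"
    unfolding k_def using ex by (rule LeastI)
  moreover have "w \<in> D k"
  proof (cases k)
    case (Suc k')
    then show ?thesis using not_less_Least[of k' "\<lambda>k. w \<notin> D (Suc k)"] k_def by simp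
  qed (simp add: \<open>w \<in> V\<close>)
  ultimately show ?thesis
    using assms(2) unfolding level_def k_def by simp
qed

lemma level_eqI:
  assumes "w \<in> D k - D (Suc k)"
  shows "level w = k"
proof -
  have w: "w \<in> V" "w \<noteq> v"
    using assms D_subset mem_D by blast+
  have "\<not> Suc j \<le> j'" if "w \<in> D j' - D (Suc j')" "w \<in> D j - D (Suc j)" for j j'
    using that D_antimono by blast
  then show ?thesis
    using level_D[OF w] assms by (metis not_less_eq_eq nle_le)
qed

lemma level_root: "level v = depth"
  unfolding level_def by simp

lemma level_less_depth:
  assumes "w \<in> V" "w \<noteq> v"
  shows "level w < depth"
proof (rule ccontr)
  assume "\<not> level w < depth"
  then have "D (level w) = {v}"
    using D_eq_singleton_iff by simp
  with level_D[OF assms] assms(2) show False by blast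
qed

lemma level_eq_depth_iff: "w \<in> V \<Longrightarrow> level w = depth \<longleftrightarrow> w = v"
  using level_less_depth level_root by fastforce

lemma level_le_depth: "w \<in> V \<Longrightarrow> level w \<le> depth"
  using level_less_depth[of w] level_root by (cases "w = v") (auto simp: less_imp_le)

lemma level_mem_D: "w \<in> V \<Longrightarrow> w \<in> D (level w)"
  using level_D mem_D by (cases "w = v") auto

lemma level_image: "level ` V = {..depth}"
proof
  show "level ` V \<subseteq> {..depth}"
    using level_le_depth by auto
  show "{..depth} \<subseteq> level ` V"
  proof
    fix j assume "j \<in> {..depth}"
    show "j \<in> level ` V"
    proof (cases "j = depth")
      case True
      then show ?thesis using level_root root by force
    next
      case False
      then have "D (Suc j) \<subset> D j"
        using \<open>j \<in> {..depth}\<close> peel_psubset[OF peel_D] D_eq_singleton_iff by auto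
      then obtain u where u: "u \<in> D j - D (Suc j)" by blast
      then have "u \<in> V" "level u = j"
        using D_subset level_eqI by blast+
      then show ?thesis by (simp add: rev_image_eqI)
    qed
  qed
qed

lemma Mvw_eq_Mvw_D: "w \<in> D k \<Longrightarrow> Mvw V E v w = Mvw (D k) E v w"
  using Mvw_module[OF is_module_D mem_D] .

lemma Mvw_subset_D_level:
  assumes "w \<in> V"
  shows "Mvw V E v w \<subseteq> D (level w)"
  using Mvw_eq_Mvw_D[OF level_mem_D[OF assms]] Mvw_subset[OF mem_D level_mem_D[OF assms]]
  by simp

lemma D_Suc_level_psubset_Mvw:
  assumes "w \<in> V" "w \<noteq> v"
  shows "D (Suc (level w)) \<subset> Mvw V E v w"
proof -
  have "D (level w) \<noteq> {v}"
    using level_D[OF assms] assms(2) by blast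
  then show ?thesis
    using peel_psubset_Mvw[OF peel_D level_D[OF assms]] Mvw_eq_Mvw_D[of w "level w"]
      level_D[OF assms] by simp
qed

lemma prec_v_if_level_less:
  assumes "w1 \<in> V" "w2 \<in> V" "level w1 < level w2"
  shows "prec_v V E v w1 w2"
proof -
  have "w1 \<noteq> v"
    using assms level_root level_le_depth by fastforce
  have "Mvw V E v w2 \<subseteq> D (level w2)"
    using Mvw_subset_D_level[OF assms(2)] .
  also have "\<dots> \<subseteq> D (Suc (level w1))"
    using assms(3) by (intro D_antimono) simp
  also have "\<dots> \<subset> Mvw V E v w1"
    using D_Suc_level_psubset_Mvw[OF assms(1) \<open>w1 \<noteq> v\<close>] .
  finally show ?thesis
    unfolding prec_v_def .
qed

lemma not_prec_v_if_level_eq: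
  assumes "w1 \<in> V" "w2 \<in> V" "level w1 = level w2"
  shows "\<not> prec_v V E v w1 w2"
proof (cases "w1 = v \<or> w2 = v")
  case True
  then have "w1 = w2"
    using assms level_eq_depth_iff level_root by metis
  then show ?thesis
    unfolding prec_v_def by simp
next
  case False
  define k where "k = level w1"
  have "w1 \<in> D k - D (Suc k)"
    unfolding k_def using level_D[OF assms(1)] False by blast
  moreover have "w2 \<in> D k - D (Suc k)"
    unfolding k_def assms(3) using level_D[OF assms(2)] False by blast
  ultimately have w: "w1 \<in> D k - D (Suc k)" "w2 \<in> D k - D (Suc k)" .
  then have "D k \<noteq> {v}"
    using False by blast
  then have "\<not> Mvw (D k) E v w2 \<subset> Mvw (D k) E v w1"
    using peel_incomparable[OF peel_D w(2,1)] by blast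
  moreover have "Mvw V E v w1 = Mvw (D k) E v w1"
    by (rule Mvw_eq_Mvw_D) (use w(1) in blast)
  moreover have "Mvw V E v w2 = Mvw (D k) E v w2"
    by (rule Mvw_eq_Mvw_D) (use w(2) in blast)
  ultimately show ?thesis
    unfolding prec_v_def by simp
qed

lemma prec_v_iff_level_less:
  assumes "w1 \<in> V" "w2 \<in> V"
  shows "prec_v V E v w1 w2 \<longleftrightarrow> level w1 < level w2"
proof (cases "level w1" "level w2" rule: linorder_cases)
  case greater
  then have "prec_v V E v w2 w1"
    using prec_v_if_level_less assms by blast
  then show ?thesis
    using greater unfolding prec_v_def by auto
qed (use prec_v_if_level_less not_prec_v_if_level_eq assms in auto)

lemma D_eq_Union_Mvw_level: "D i = {v} \<union> \<Union> {Mvw V E v w | w. w \<in> V \<and> level w = i}"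
proof (cases "i < depth")
  case True
  have "D (Suc i) \<subset> D i"
    using True peel_psubset[OF peel_D] D_eq_singleton_iff by auto
  then obtain w where w: "w \<in> D i - D (Suc i)" by blast
  then have "w \<in> V" "w \<noteq> v" "level w = i"
    using D_subset mem_D level_eqI[OF w] by blast+
  have "x \<in> \<Union> {Mvw V E v w | w. w \<in> V \<and> level w = i}" if "x \<in> D i" for x
  proof (cases "x \<in> D (Suc i)")
    case True
    then show ?thesis
      using D_Suc_level_psubset_Mvw[OF \<open>w \<in> V\<close> \<open>w \<noteq> v\<close>] \<open>w \<in> V\<close> \<open>level w = i\<close> by blast
  next
    case False
    then have "x \<in> V" "level x = i"
      using that D_subset level_eqI by blast+
    then show ?thesis
      using Mvw_mem(2)[of x V E v] by blast
  qed
  moreover have "Mvw V E v w \<subseteq> D i" if "w \<in> V" "level w = i" for w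
    using Mvw_subset_D_level that by blast
  ultimately show ?thesis
    using mem_D by blast
next
  case False
  have "Mvw V E v w = {v}" if "w \<in> V" "level w = i" for w
  proof -
    have "w = v"
      using level_less_depth[of w] that False by (cases "w = v") auto
    then show ?thesis using Mvw_same[OF root] by simp
  qed
  moreover have "D i = {v}"
    using False D_eq_singleton_iff by simp
  ultimately show ?thesis by blast
qed

end

theorem lemma3p15:
  fixes V :: "'a set" and E :: "'a \<Rightarrow> 'a \<Rightarrow> bool" and v :: 'a and i :: nat
  assumes "graph V E" and "v \<in> V" and "i \<le> card V"
  shows "Dseq V E v i = Sset V E v i"
proof -
  interpret rooted_graph V E v
    using assms(1,2) by unfold_locales
  have "pos_v V E v (cls_v V E v w) = level w" if "w \<in> V" for w
  proof (rule pos_v_cls_v[OF prec_v_iff_level_less that])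
    show "{..<level w} \<subseteq> level ` V"
      unfolding level_image using level_le_depth[OF that] by auto
  qed
  then have "{Mvw V E v w | w. w \<in> V \<and> pos_v V E v (cls_v V E v w) = i} =
      {Mvw V E v w | w. w \<in> V \<and> level w = i}"
    by metis
  then show ?thesis
    unfolding Sset_def using D_eq_Union_Mvw_level by simp
qed

end
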